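(* For any mechanism $(q_i,P_i)_{i\in\mathcal I}$ (with opt-out messages) and any nonnegative numbers $\alpha_i(m_i'\mid m_i)\ge 0$, $i\in\mathcal I$, $(m_i,m_i')\in M_i\times M_i$, we have for every $v\in V$: $$\min_{m\in M}\mathrm{Rev}(v,m)\le v.$$ In particular $\sum_v p(v)\min_m\mathrm{Rev}(v,m)\le\sum_v v\,p(v)$.
   Context: A mechanism for buyers $\mathcal I=\{1,\ldots,I\}$ with common value $v\in V=\{0,\nu,\ldots,1\}$ consists of finite message sets $M_i$ ($M=\prod_iM_i$), allocation rules $q_i:M\to[0,1]$ with $\sum_iq_i(m)\le1$, and payment rules $P_i:M\to\mathbb R$, where each $M_i$ contains an opt-out message $0$ with $q_i(0,m_{-i})=P_i(0,m_{-i})=0$ for all $m_{-i}$. $U_i(v,m)=v\,q_i(m)-P_i(m)$. Virtual revenue: $\mathrm{Rev}(v,m)=\sum_i\Big(P_i(m)+\sum_{m_i'\in M_i}\big(U_i(v,(m_i',m_{-i}))-U_i(v,m)\big)\alpha_i(m_i'\mid m_i)\Big)$. *)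

theory Defs
  imports Complex_Main "HOL-Library.FuncSet"
begin

definition Vgrid :: "nat \<Rightarrow> real set" where
  "Vgrid K = {real k / real K | k. k \<le> K}"

definition profiles :: "nat \<Rightarrow> (nat \<Rightarrow> 'm set) \<Rightarrow> (nat \<Rightarrow> 'm) set" where
  "profiles I M = Pi\<^sub>E {1..I} M"

definition is_mechanism ::
  "nat \<Rightarrow> (nat \<Rightarrow> 'm set) \<Rightarrow> (nat \<Rightarrow> 'm) \<Rightarrow> (nat \<Rightarrow> (nat \<Rightarrow> 'm) \<Rightarrow> real)
     \<Rightarrow> (nat \<Rightarrow> (nat \<Rightarrow> 'm) \<Rightarrow> real) \<Rightarrow> bool" where
  "is_mechanism I M z q P \<longleftrightarrow>
     (\<forall>i\<in>{1..I}. finite (M i) \<and> z i \<in> M i) \<and>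
     (\<forall>m\<in>profiles I M. (\<forall>i\<in>{1..I}. 0 \<le> q i m \<and> q i m \<le> 1) \<and> (\<Sum>i\<in>{1..I}. q i m) \<le> 1) \<and>
     (\<forall>m\<in>profiles I M. \<forall>i\<in>{1..I}. q i (m(i := z i)) = 0 \<and> P i (m(i := z i)) = 0)"

definition util :: "(nat \<Rightarrow> (nat \<Rightarrow> 'm) \<Rightarrow> real) \<Rightarrow> (nat \<Rightarrow> (nat \<Rightarrow> 'm) \<Rightarrow> real)
     \<Rightarrow> nat \<Rightarrow> real \<Rightarrow> (nat \<Rightarrow> 'm) \<Rightarrow> real" where
  "util q P i v m = v * q i m - P i m"

text \<open>Virtual revenue; alpha i m' mi stands for alpha_i(m' | mi).\<close>
definition Rev :: "nat \<Rightarrow> (nat \<Rightarrow> 'm set) \<Rightarrow> (nat \<Rightarrow> (nat \<Rightarrow> 'm) \<Rightarrow> real)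
     \<Rightarrow> (nat \<Rightarrow> (nat \<Rightarrow> 'm) \<Rightarrow> real) \<Rightarrow> (nat \<Rightarrow> 'm \<Rightarrow> 'm \<Rightarrow> real) \<Rightarrow> real \<Rightarrow> (nat \<Rightarrow> 'm) \<Rightarrow> real" where
  "Rev I M q P \<alpha> v m = (\<Sum>i\<in>{1..I}. P i m +
      (\<Sum>m'\<in>M i. (util q P i v (m(i := m')) - util q P i v m) * \<alpha> i m' (m i)))"

end

theory Submission
  imports Defs
begin

text \<open>
For each buyer i, consider the continuous-time Markov chain on M i that jumps from x to y
at rate alpha_i(y | x), plus rate one towards the opt-out message.  Any finite chain with
nonnegative rates has a stationary measure mu_i, and under the product measure of the
mu_i the expected deviation gain of every buyer is the expectation of a generator, hence
zero.  The opt-out jump turns the term -U_i(v, m) of virtual revenue into such a deviation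
gain, so the mu-average of Rev(v, .) equals the mu-average of v times the total allocation,
which is at most v.  The minimum lies below the average.
\<close>

definition generator :: "'a set \<Rightarrow> ('a \<Rightarrow> 'a \<Rightarrow> real) \<Rightarrow> ('a \<Rightarrow> real) \<Rightarrow> 'a \<Rightarrow> real" where
  "generator S a W x = (\<Sum>y\<in>S. a x y * (W y - W x))"

definition stationary :: "'a set \<Rightarrow> ('a \<Rightarrow> 'a \<Rightarrow> real) \<Rightarrow> ('a \<Rightarrow> real) \<Rightarrow> bool" where
  "stationary S a \<mu> \<longleftrightarrow> (\<forall>W. (\<Sum>x\<in>S. \<mu> x * generator S a W x) = 0)"

lemma sum_indicator_mult_eq:
  assumes "finite S" "s \<in> S"
  shows "(\<Sum>x\<in>S. (if x = s then 1 else 0) * f x) = (f s :: real)"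
proof -
  have "(\<Sum>x\<in>S. (if x = s then 1 else 0) * f x) = (\<Sum>x\<in>S. if x = s then f x else 0)"
    by (intro sum.cong) auto
  then show ?thesis
    using assms by simp
qed

lemma stationary_point_mass_absorbing:
  assumes "finite S" "s \<in> S" and "\<And>y. y \<in> S \<Longrightarrow> y \<noteq> s \<Longrightarrow> a s y = 0"
  shows "stationary S a (\<lambda>x. if x = s then 1 else 0)"
proof -
  have "generator S a W s = 0" for W
    unfolding generator_def using assms(3) by (intro sum.neutral) auto
  then show ?thesis
    using assms(1,2) by (simp add: stationary_def sum_indicator_mult_eq)
qed

text \<open>Censoring: the chain watched only while in F moves from x to y either directly or
through s, which gives the rates below; a stationary measure of it extends to the whole chain.\<close>

lemma stationary_censored:
  fixes a :: "'a \<Rightarrow> 'a \<Rightarrow> real" and F :: "'a set" and s :: 'a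
  defines "A \<equiv> \<Sum>y\<in>F. a s y"
  assumes "finite F" "s \<notin> F" "A \<noteq> 0"
    and "stationary F (\<lambda>x y. a x y + a x s * a s y / A) \<mu>"
  shows "stationary (insert s F) a (\<mu>(s := (\<Sum>x\<in>F. \<mu> x * a x s) / A))"
  unfolding stationary_def
proof
  fix W
  define B where "B = generator F a W s"
  define a' where "a' x y = a x y + a x s * a s y / A" for x y
  have gen_insert: "generator (insert s F) a W x = generator F a W x + a x s * (W s - W x)" for x
    using assms(2,3) by (simp add: generator_def)
  have "generator F a' W x = generator F a W x + a x s / A * (\<Sum>y\<in>F. a s y * (W y - W x))" for x
  proof -
    have "generator F a' W x = (\<Sum>y\<in>F. a x y * (W y - W x) + a x s / A * (a s y * (W y - W x)))"
      unfolding generator_def a'_def by (intro sum.cong) (auto simp: algebra_simps diff_divide_distrib)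
    then show ?thesis
      by (simp add: generator_def sum.distrib sum_distrib_left)
  qed
  moreover have "(\<Sum>y\<in>F. a s y * (W y - W x)) = B + A * (W s - W x)" for x
  proof -
    have "(\<Sum>y\<in>F. a s y * (W y - W x)) = (\<Sum>y\<in>F. a s y * (W y - W s) + a s y * (W s - W x))"
      by (intro sum.cong) (auto simp: algebra_simps)
    then show ?thesis
      unfolding B_def A_def generator_def by (simp add: sum.distrib sum_distrib_right)
  qed
  ultimately have "generator F a' W x = generator F a W x + a x s / A * (B + A * (W s - W x))" for x
    by simp
  then have gen_censored: "generator F a' W x = generator (insert s F) a W x + a x s * B / A" for x
    using assms(4) by (simp add: gen_insert field_simps)
  have "(\<Sum>x\<in>F. \<mu> x * generator (insert s F) a W x)
      = (\<Sum>x\<in>F. \<mu> x * generator F a' W x - \<mu> x * a x s / A * B)"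
    by (intro sum.cong) (simp_all add: gen_censored algebra_simps)
  also have "\<dots> = (\<Sum>x\<in>F. \<mu> x * generator F a' W x) - (\<Sum>x\<in>F. \<mu> x * a x s) / A * B"
    by (simp add: sum_subtractf sum_divide_distrib sum_distrib_right)
  also have "(\<Sum>x\<in>F. \<mu> x * generator F a' W x) = 0"
    using assms(5) unfolding stationary_def a'_def by blast
  finally have "(\<Sum>x\<in>F. \<mu> x * generator (insert s F) a W x) = - ((\<Sum>x\<in>F. \<mu> x * a x s) / A * B)"
    by simp
  moreover have "generator (insert s F) a W s = B"
    using assms(2,3) by (simp add: generator_def B_def)
  moreover have "(\<Sum>x\<in>F. (\<mu>(s := c)) x * f x) = (\<Sum>x\<in>F. \<mu> x * f x)" for c f
    using assms(3) by (intro sum.cong) auto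
  ultimately show "(\<Sum>x\<in>insert s F. (\<mu>(s := (\<Sum>x\<in>F. \<mu> x * a x s) / A)) x
      * generator (insert s F) a W x) = 0"
    using assms(2,3) by simp
qed

lemma stationary_measure_exists:
  fixes a :: "'a \<Rightarrow> 'a \<Rightarrow> real"
  assumes "finite S" "S \<noteq> {}" "\<forall>x\<in>S. \<forall>y\<in>S. a x y \<ge> 0"
  shows "\<exists>\<mu>. (\<forall>x\<in>S. \<mu> x \<ge> 0) \<and> sum \<mu> S > 0 \<and> stationary S a \<mu>"
  using assms
proof (induction S arbitrary: a rule: finite_ne_induct)
  case (singleton x)
  show ?case
    by (intro exI[of _ "\<lambda>_. 1"]) (simp add: stationary_def generator_def)
next
  case (insert s F)
  define A where "A = (\<Sum>y\<in>F. a s y)"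
  have a_nonneg: "\<And>x y. x \<in> insert s F \<Longrightarrow> y \<in> insert s F \<Longrightarrow> a x y \<ge> 0"
    using insert.prems by blast
  show ?case
  proof (cases "A = 0")
    case True
    then have "\<forall>y\<in>F. a s y = 0"
      using insert.hyps(1) a_nonneg unfolding A_def by (subst (asm) sum_nonneg_eq_0_iff) auto
    then have "stationary (insert s F) a (\<lambda>x. if x = s then 1 else 0)"
      using insert.hyps(1) by (intro stationary_point_mass_absorbing) auto
    then show ?thesis
      using insert.hyps(1) by (intro exI[of _ "\<lambda>x. if x = s then 1 else 0"]) (simp add: sum.If_cases)
  next
    case False
    then have A_pos: "A > 0"
      using a_nonneg sum_nonneg[of F "a s"] unfolding A_def by fastforce
    have "\<forall>x\<in>F. \<forall>y\<in>F. a x y + a x s * a s y / A \<ge> 0"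
      using a_nonneg A_pos by (auto intro!: add_nonneg_nonneg divide_nonneg_pos)
    from insert.IH[OF this] obtain \<mu> where \<mu>_nonneg: "\<forall>x\<in>F. \<mu> x \<ge> 0" and \<mu>_pos: "sum \<mu> F > 0"
      and \<mu>_stationary: "stationary F (\<lambda>x y. a x y + a x s * a s y / A) \<mu>"
      by blast
    define c where "c = (\<Sum>x\<in>F. \<mu> x * a x s) / A"
    have "c \<ge> 0"
      unfolding c_def using \<mu>_nonneg a_nonneg A_pos by (auto intro!: divide_nonneg_pos sum_nonneg)
    moreover have "sum (\<mu>(s := c)) F = sum \<mu> F"
      using insert.hyps(3) by (intro sum.cong) auto
    ultimately have "(\<forall>x\<in>insert s F. (\<mu>(s := c)) x \<ge> 0) \<and> sum (\<mu>(s := c)) (insert s F) > 0"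
      using \<mu>_nonneg \<mu>_pos insert.hyps(1,3) by auto
    moreover have "stationary (insert s F) a (\<mu>(s := c))"
      using stationary_censored[OF insert.hyps(1,3)] \<mu>_stationary False
      unfolding c_def A_def by blast
    ultimately show ?thesis
      by blast
  qed
qed

lemma sum_PiE_split_coordinate:
  assumes "finite J" "i \<in> J"
  shows "(\<Sum>m\<in>Pi\<^sub>E J M. (F m :: real)) = (\<Sum>x\<in>M i. \<Sum>r\<in>Pi\<^sub>E (J - {i}) M. F (r(i := x)))"
proof -
  have "(\<Sum>m\<in>Pi\<^sub>E J M. F m) = (\<Sum>(x,r)\<in>M i \<times> Pi\<^sub>E (J - {i}) M. F (r(i := x)))"
    using assms
    by (intro sum.reindex_bij_witness[of _ "\<lambda>(x,r). r(i := x)" "\<lambda>g. (g i, g(i := undefined))"])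
       (auto simp: PiE_def extensional_def Pi_def)
  also have "\<dots> = (\<Sum>x\<in>M i. \<Sum>r\<in>Pi\<^sub>E (J - {i}) M. F (r(i := x)))"
    by (subst sum.cartesian_product) auto
  finally show ?thesis .
qed

lemma stationary_product_generator_sum_zero:
  fixes \<mu> :: "'i \<Rightarrow> 'm \<Rightarrow> real" and a :: "'m \<Rightarrow> 'm \<Rightarrow> real"
  assumes "finite J" "i \<in> J" and "stationary (M i) a (\<mu> i)"
  shows "(\<Sum>m\<in>Pi\<^sub>E J M. (\<Prod>j\<in>J. \<mu> j (m j)) * generator (M i) a (\<lambda>y. g (m(i := y))) (m i)) = 0"
proof -
  define w where "w r = (\<Prod>j\<in>J - {i}. \<mu> j (r j))" for r
  have prod_split: "(\<Prod>j\<in>J. \<mu> j ((r(i := x)) j)) = \<mu> i x * w r" for r x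
    using assms(1,2) unfolding w_def by (subst prod.remove[of J i]) (auto intro!: prod.cong)
  have "(\<Sum>m\<in>Pi\<^sub>E J M. (\<Prod>j\<in>J. \<mu> j (m j)) * generator (M i) a (\<lambda>y. g (m(i := y))) (m i))
      = (\<Sum>r\<in>Pi\<^sub>E (J - {i}) M. w r *
           (\<Sum>x\<in>M i. \<mu> i x * generator (M i) a (\<lambda>y. g (r(i := y))) x))"
    unfolding sum_PiE_split_coordinate[OF assms(1,2)]
    by (simp only: prod_split fun_upd_upd fun_upd_same) (subst sum.swap, simp add: sum_distrib_left mult_ac)
  also have "\<dots> = 0"
    using assms(3) by (simp add: stationary_def)
  finally show ?thesis .
qed

lemma Min_le_of_weighted_sum_le:
  fixes f w :: "'a \<Rightarrow> real"
  assumes "finite S" "\<forall>x\<in>S. w x \<ge> 0" "sum w S > 0" "(\<Sum>x\<in>S. w x * f x) \<le> c * sum w S"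
  shows "Min (f ` S) \<le> c"
proof -
  have "S \<noteq> {}"
    using assms(3) by auto
  then have "Min (f ` S) * sum w S = (\<Sum>x\<in>S. w x * Min (f ` S))"
    by (simp add: sum_distrib_right mult.commute)
  also have "\<dots> \<le> (\<Sum>x\<in>S. w x * f x)"
    using assms(1,2) by (intro sum_mono mult_left_mono) auto
  finally show ?thesis
    using assms(3,4) by (meson mult_right_le_imp_le order.trans)
qed

definition deviation_rates :: "(nat \<Rightarrow> 'm \<Rightarrow> 'm \<Rightarrow> real) \<Rightarrow> (nat \<Rightarrow> 'm) \<Rightarrow> nat \<Rightarrow> 'm \<Rightarrow> 'm \<Rightarrow> real" where
  "deviation_rates \<alpha> z i x y = \<alpha> i y x + (if y = z i then 1 else 0)"

lemma Rev_eq_allocation_plus_generators: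
  assumes "is_mechanism I M z q P" "m \<in> profiles I M"
  shows "Rev I M q P \<alpha> v m = v * (\<Sum>i\<in>{1..I}. q i m) +
    (\<Sum>i\<in>{1..I}. generator (M i) (deviation_rates \<alpha> z i) (\<lambda>y. util q P i v (m(i := y))) (m i))"
proof -
  have "P i m + (\<Sum>y\<in>M i. (util q P i v (m(i := y)) - util q P i v m) * \<alpha> i y (m i))
      = v * q i m + generator (M i) (deviation_rates \<alpha> z i) (\<lambda>y. util q P i v (m(i := y))) (m i)"
    if i: "i \<in> {1..I}" for i
  proof -
    have "finite (M i)" "z i \<in> M i" "util q P i v (m(i := z i)) = 0"
      using assms i unfolding is_mechanism_def profiles_def by (auto simp: util_def)
    then have "generator (M i) (deviation_rates \<alpha> z i) (\<lambda>y. util q P i v (m(i := y))) (m i)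
      = (\<Sum>y\<in>M i. (util q P i v (m(i := y)) - util q P i v m) * \<alpha> i y (m i)) - util q P i v m"
      by (simp add: generator_def deviation_rates_def distrib_right sum.distrib
          sum_indicator_mult_eq[where f = "\<lambda>y. util q P i v (m(i := y)) - util q P i v m"] mult.commute)
    then show ?thesis
      by (simp add: util_def)
  qed
  then have "(\<Sum>i\<in>{1..I}. P i m + (\<Sum>y\<in>M i. (util q P i v (m(i := y)) - util q P i v m) * \<alpha> i y (m i)))
      = (\<Sum>i\<in>{1..I}. v * q i m + generator (M i) (deviation_rates \<alpha> z i) (\<lambda>y. util q P i v (m(i := y))) (m i))"
    by (rule sum.cong[OF refl])
  then show ?thesis
    unfolding Rev_def by (simp add: sum.distrib sum_distrib_left)
qed

lemma Min_Rev_le_value: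
  assumes mech: "is_mechanism I M z q P"
    and \<alpha>_nonneg: "\<forall>i\<in>{1..I}. \<forall>mi\<in>M i. \<forall>mi'\<in>M i. \<alpha> i mi' mi \<ge> 0"
    and "v \<ge> 0"
  shows "Min (Rev I M q P \<alpha> v ` profiles I M) \<le> v"
proof -
  define J where "J = {1..I}"
  have M_fin: "\<forall>i\<in>J. finite (M i) \<and> z i \<in> M i"
    and q_bounds: "\<forall>m\<in>Pi\<^sub>E J M. (\<forall>i\<in>J. 0 \<le> q i m) \<and> (\<Sum>i\<in>J. q i m) \<le> 1"
    using mech unfolding is_mechanism_def profiles_def J_def by auto
  have "\<forall>i\<in>J. \<exists>\<mu>. (\<forall>x\<in>M i. \<mu> x \<ge> 0) \<and> sum \<mu> (M i) > 0 \<and> stationary (M i) (deviation_rates \<alpha> z i) \<mu>"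
    using M_fin \<alpha>_nonneg unfolding J_def
    by (intro ballI stationary_measure_exists) (auto simp: deviation_rates_def)
  then obtain \<mu> where \<mu>_nonneg: "\<forall>i\<in>J. \<forall>x\<in>M i. \<mu> i x \<ge> 0"
    and \<mu>_pos: "\<forall>i\<in>J. sum (\<mu> i) (M i) > 0"
    and \<mu>_stationary: "\<forall>i\<in>J. stationary (M i) (deviation_rates \<alpha> z i) (\<mu> i)"
    by metis
  define w where "w m = (\<Prod>j\<in>J. \<mu> j (m j))" for m
  have w_nonneg: "\<forall>m\<in>Pi\<^sub>E J M. w m \<ge> 0"
    unfolding w_def using \<mu>_nonneg by (auto intro!: prod_nonneg)
  have "sum w (Pi\<^sub>E J M) = (\<Prod>j\<in>J. sum (\<mu> j) (M j))"
    unfolding w_def using M_fin by (intro prod_sum_PiE[symmetric]) (auto simp: J_def)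
  also have "\<dots> > 0"
    using \<mu>_pos by (intro prod_pos) auto
  finally have w_pos: "sum w (Pi\<^sub>E J M) > 0" .
  let ?gen = "\<lambda>i m. generator (M i) (deviation_rates \<alpha> z i) (\<lambda>y. util q P i v (m(i := y))) (m i)"
  have "(\<Sum>m\<in>Pi\<^sub>E J M. w m * Rev I M q P \<alpha> v m)
      = (\<Sum>m\<in>Pi\<^sub>E J M. w m * (v * (\<Sum>i\<in>J. q i m))) + (\<Sum>m\<in>Pi\<^sub>E J M. \<Sum>i\<in>J. w m * ?gen i m)"
    using Rev_eq_allocation_plus_generators[OF mech]
    by (simp add: J_def profiles_def distrib_left sum.distrib sum_distrib_left)
  also have "(\<Sum>m\<in>Pi\<^sub>E J M. \<Sum>i\<in>J. w m * ?gen i m) = (\<Sum>i\<in>J. \<Sum>m\<in>Pi\<^sub>E J M. w m * ?gen i m)"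
    by (rule sum.swap)
  also have "(\<Sum>i\<in>J. \<Sum>m\<in>Pi\<^sub>E J M. w m * ?gen i m) = 0"
    using \<mu>_stationary unfolding w_def J_def
    by (intro sum.neutral ballI stationary_product_generator_sum_zero) auto
  also have "(\<Sum>m\<in>Pi\<^sub>E J M. w m * (v * (\<Sum>i\<in>J. q i m))) \<le> (\<Sum>m\<in>Pi\<^sub>E J M. w m * v)"
    using q_bounds w_nonneg \<open>v \<ge> 0\<close> by (intro sum_mono mult_left_mono mult_left_le) auto
  finally have "(\<Sum>m\<in>Pi\<^sub>E J M. w m * Rev I M q P \<alpha> v m) \<le> v * sum w (Pi\<^sub>E J M)"
    by (simp add: sum_distrib_left mult.commute)
  moreover have "finite (Pi\<^sub>E J M)"
    using M_fin unfolding J_def by (intro finite_PiE) auto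
  ultimately show ?thesis
    using w_nonneg w_pos unfolding profiles_def J_def by (intro Min_le_of_weighted_sum_le)
qed

theorem lemma1:
  fixes I K :: nat and M :: "nat \<Rightarrow> 'm set" and z :: "nat \<Rightarrow> 'm"
    and q P :: "nat \<Rightarrow> (nat \<Rightarrow> 'm) \<Rightarrow> real"
    and \<alpha> :: "nat \<Rightarrow> 'm \<Rightarrow> 'm \<Rightarrow> real" and p :: "real \<Rightarrow> real"
  assumes "K \<ge> 1"
    and "is_mechanism I M z q P"
    and "\<forall>i\<in>{1..I}. \<forall>mi\<in>M i. \<forall>mi'\<in>M i. \<alpha> i mi' mi \<ge> 0"
    and "\<forall>v\<in>Vgrid K. p v \<ge> 0"
  shows "(\<forall>v\<in>Vgrid K. Min (Rev I M q P \<alpha> v ` profiles I M) \<le> v) \<and>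
         (\<Sum>v\<in>Vgrid K. p v * Min (Rev I M q P \<alpha> v ` profiles I M)) \<le> (\<Sum>v\<in>Vgrid K. v * p v)"
proof -
  have pointwise: "\<forall>v\<in>Vgrid K. Min (Rev I M q P \<alpha> v ` profiles I M) \<le> v"
    using Min_Rev_le_value[OF assms(2,3)] unfolding Vgrid_def by auto
  moreover have "(\<Sum>v\<in>Vgrid K. p v * Min (Rev I M q P \<alpha> v ` profiles I M)) \<le> (\<Sum>v\<in>Vgrid K. v * p v)"
    using pointwise assms(4) by (intro sum_mono) (metis mult.commute mult_left_mono)
  ultimately show ?thesis ..
qed

end
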